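(* Let $X$ be an exponential vector space over $\mathbb K$ and $V$ a vector space over $\mathbb K$. Then the evs $X\times V$ has a basis if and only if $X$ has a basis. Moreover (when these bases exist) $\dim(X\times V)=[\dim(X\smallsetminus X_0):\dim X_0+\dim V]$.
   Context: $\mathbb K$ is $\mathbb R$ or $\mathbb C$. An exponential vector space (evs) over a field $K$ is a partially ordered set $(X,\leq)$ with a binary operation $+$ on $X$ and a map $K\times X\to X$, $(\alpha,x)\mapsto \alpha x$, such that: (A1) $(X,+)$ is a commutative semigroup with identity $\theta$; (A2) $x\leq y$ implies $x+z\leq y+z$ and $\alpha x\leq \alpha y$ for all $z\in X$, $\alpha\in K$; (A3) $\alpha(x+y)=\alpha x+\alpha y$, $\alpha(\beta x)=(\alpha\beta)x$, $(\alpha+\beta)x\leq \alpha x+\beta x$, $1x=x$; (A4) $\alpha x=\theta$ iff $\alpha=0$ or $x=\theta$; (A5) $x+(-1)x=\theta$ iff $x\in X_0$, where $X_0:=\{z\in X: y\not\leq z \text{ for all } y\in X\smallsetminus\{z\}\}$ (the set of minimal elements, called the primitive space; it is a vector space over $K$); (A6) for each $x\in X$ there is $p\in X_0$ with $p\leq x$. For $x\in X\smallsetminus X_0$ let $L(x):=\{z\in X: z\geq \alpha x+p \text{ for some } \alpha\in K\smallsetminus\{0\},\ p\in X_0\}$. A subset $B\subseteq X\smallsetminus X_0$ generates $X\smallsetminus X_0$ if $X\smallsetminus X_0=\bigcup_{b\in B}L(b)$. Elements $x,y\in X\smallsetminus X_0$ are orderly dependent if $x\in L(y)$ or $y\in L(x)$,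 and orderly independent otherwise; $B$ is orderly independent if any two distinct members are orderly independent. A basis of $X\smallsetminus X_0$ is an orderly independent generating subset of $X\smallsetminus X_0$; "$X$ has a basis" means $X\smallsetminus X_0$ has a basis. All bases of $X\smallsetminus X_0$ have the same cardinality, denoted $\dim(X\smallsetminus X_0)$; $\dim X_0$ is the vector-space dimension of $X_0$ (taken as $0$ if $X_0=\{\theta\}$), and $\dim X:=[\dim(X\smallsetminus X_0):\dim X_0]$. The evs $X\times V$ has operations $(x_1,e_1)+(x_2,e_2)=(x_1+x_2,e_1+e_2)$, $\alpha(x,e)=(\alpha x,\alpha e)$, and order $(x_1,e_1)\leq(x_2,e_2)$ iff $x_1\leq x_2$ and $e_1=e_2$; its primitive space is $X_0\times V$. *)

theory Defs
  imports Complex_Main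
begin

text \<open>An exponential vector space (evs) over a field 'k is encoded on a carrier type 'x
  (the whole type is the carrier) by an order relation le, addition add with
  identity th, and scalar multiplication sm.\<close>

definition prim :: "('x \<Rightarrow> 'x \<Rightarrow> bool) \<Rightarrow> 'x set" where
  "prim le = {z. \<forall>y. y \<noteq> z \<longrightarrow> \<not> le y z}"

definition evs :: "('x \<Rightarrow> 'x \<Rightarrow> bool) \<Rightarrow> ('x \<Rightarrow> 'x \<Rightarrow> 'x) \<Rightarrow> 'x
    \<Rightarrow> ('k::field \<Rightarrow> 'x \<Rightarrow> 'x) \<Rightarrow> bool" where
  "evs le add th sm \<longleftrightarrow>
     \<comment> \<open>partial order\<close>
     reflp le \<and> transp le \<and> antisymp le \<and>
     \<comment> \<open>(A1)\<close>
     comm_monoid add th \<and>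
     \<comment> \<open>(A2)\<close>
     (\<forall>x y z. le x y \<longrightarrow> le (add x z) (add y z)) \<and>
     (\<forall>x y a. le x y \<longrightarrow> le (sm a x) (sm a y)) \<and>
     \<comment> \<open>(A3)\<close>
     (\<forall>a x y. sm a (add x y) = add (sm a x) (sm a y)) \<and>
     (\<forall>a b x. sm a (sm b x) = sm (a * b) x) \<and>
     (\<forall>a b x. le (sm (a + b) x) (add (sm a x) (sm b x))) \<and>
     (\<forall>x. sm 1 x = x) \<and>
     \<comment> \<open>(A4)\<close>
     (\<forall>a x. sm a x = th \<longleftrightarrow> a = 0 \<or> x = th) \<and>
     \<comment> \<open>(A5)\<close>
     (\<forall>x. add x (sm (-1) x) = th \<longleftrightarrow> x \<in> prim le) \<and>
     \<comment> \<open>(A6)\<close>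
     (\<forall>x. \<exists>p \<in> prim le. le p x)"

definition Lset :: "('x \<Rightarrow> 'x \<Rightarrow> bool) \<Rightarrow> ('x \<Rightarrow> 'x \<Rightarrow> 'x) \<Rightarrow> ('k::field \<Rightarrow> 'x \<Rightarrow> 'x)
    \<Rightarrow> 'x \<Rightarrow> 'x set" where
  "Lset le add sm x = {z. \<exists>a p. a \<noteq> 0 \<and> p \<in> prim le \<and> le (add (sm a x) p) z}"

definition orderly_independent_set ::
    "('x \<Rightarrow> 'x \<Rightarrow> bool) \<Rightarrow> ('x \<Rightarrow> 'x \<Rightarrow> 'x) \<Rightarrow> ('k::field \<Rightarrow> 'x \<Rightarrow> 'x) \<Rightarrow> 'x set \<Rightarrow> bool" where
  "orderly_independent_set le add sm B \<longleftrightarrow>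
     (\<forall>x\<in>B. \<forall>y\<in>B. x \<noteq> y \<longrightarrow> \<not> (x \<in> Lset le add sm y \<or> y \<in> Lset le add sm x))"

definition generates ::
    "('x \<Rightarrow> 'x \<Rightarrow> bool) \<Rightarrow> ('x \<Rightarrow> 'x \<Rightarrow> 'x) \<Rightarrow> ('k::field \<Rightarrow> 'x \<Rightarrow> 'x) \<Rightarrow> 'x set \<Rightarrow> bool" where
  "generates le add sm B \<longleftrightarrow>
     B \<subseteq> - prim le \<and> - prim le = (\<Union>b\<in>B. Lset le add sm b)"

definition evs_basis ::
    "('x \<Rightarrow> 'x \<Rightarrow> bool) \<Rightarrow> ('x \<Rightarrow> 'x \<Rightarrow> 'x) \<Rightarrow> ('k::field \<Rightarrow> 'x \<Rightarrow> 'x) \<Rightarrow> 'x set \<Rightarrow> bool" where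
  "evs_basis le add sm B \<longleftrightarrow> orderly_independent_set le add sm B \<and> generates le add sm B"

definition has_basis ::
    "('x \<Rightarrow> 'x \<Rightarrow> bool) \<Rightarrow> ('x \<Rightarrow> 'x \<Rightarrow> 'x) \<Rightarrow> ('k::field \<Rightarrow> 'x \<Rightarrow> 'x) \<Rightarrow> bool" where
  "has_basis le add sm \<longleftrightarrow> (\<exists>B. evs_basis le add sm B)"

definition esum :: "('x \<Rightarrow> 'x \<Rightarrow> 'x) \<Rightarrow> 'x \<Rightarrow> ('b \<Rightarrow> 'x) \<Rightarrow> 'b set \<Rightarrow> 'x" where
  "esum add th = comm_monoid_set.F add th"

definition prim_basis ::
    "('x \<Rightarrow> 'x \<Rightarrow> bool) \<Rightarrow> ('x \<Rightarrow> 'x \<Rightarrow> 'x) \<Rightarrow> 'x \<Rightarrow> ('k::field \<Rightarrow> 'x \<Rightarrow> 'x) \<Rightarrow> 'x set \<Rightarrow> bool" where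
  "prim_basis le add th sm D \<longleftrightarrow>
     D \<subseteq> prim le \<and>
     (\<forall>F c. finite F \<longrightarrow> F \<subseteq> D \<longrightarrow> esum add th (\<lambda>d. sm (c d) d) F = th \<longrightarrow> (\<forall>d\<in>F. c d = 0)) \<and>
     (\<forall>x\<in>prim le. \<exists>F c. finite F \<and> F \<subseteq> D \<and> x = esum add th (\<lambda>d. sm (c d) d) F)"

definition prod_le :: "('x \<Rightarrow> 'x \<Rightarrow> bool) \<Rightarrow> 'x \<times> 'v \<Rightarrow> 'x \<times> 'v \<Rightarrow> bool" where
  "prod_le le p q \<longleftrightarrow> le (fst p) (fst q) \<and> snd p = snd q"

definition prod_add :: "('x \<Rightarrow> 'x \<Rightarrow> 'x) \<Rightarrow> 'x \<times> 'v::ab_group_add \<Rightarrow> 'x \<times> 'v \<Rightarrow> 'x \<times> 'v" where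
  "prod_add add p q = (add (fst p) (fst q), snd p + snd q)"

definition prod_sm :: "('k \<Rightarrow> 'x \<Rightarrow> 'x) \<Rightarrow> ('k \<Rightarrow> 'v \<Rightarrow> 'v) \<Rightarrow> 'k \<Rightarrow> 'x \<times> 'v \<Rightarrow> 'x \<times> 'v" where
  "prod_sm sm scale a p = (sm a (fst p), scale a (snd p))"

definition thm8_conclusion ::
    "('x \<Rightarrow> 'x \<Rightarrow> bool) \<Rightarrow> ('x \<Rightarrow> 'x \<Rightarrow> 'x) \<Rightarrow> 'x \<Rightarrow> ('k::field \<Rightarrow> 'x \<Rightarrow> 'x)
     \<Rightarrow> ('k \<Rightarrow> 'v::ab_group_add \<Rightarrow> 'v) \<Rightarrow> bool" where
  "thm8_conclusion le add th sm scale \<longleftrightarrow>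
     (has_basis (prod_le le) (prod_add add) (prod_sm sm scale) \<longleftrightarrow> has_basis le add sm) \<and>
     \<comment> \<open>dim of the non-primitive parts agree\<close>
     (\<forall>B B'. evs_basis (prod_le le) (prod_add add) (prod_sm sm scale) B \<longrightarrow>
             evs_basis le add sm B' \<longrightarrow> (card_of B, card_of B') \<in> ordIso) \<and>
     \<comment> \<open>dim (X0 \<times> V) = dim X0 + dim V\<close>
     (\<forall>C D E. prim_basis (prod_le le) (prod_add add) (th, 0) (prod_sm sm scale) C \<longrightarrow>
             prim_basis le add th sm D \<longrightarrow>
             \<not> module.dependent scale E \<longrightarrow> module.span scale E = UNIV \<longrightarrow>
             (card_of C, BNF_Cardinal_Arithmetic.csum (card_of D) (card_of E)) \<in> ordIso)"

end

(*
  In X \<times> V the order compares first components only, so the primitive space is X0 \<times> V and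
  L(x, v) = L(x) \<times> V.  Hence B is a basis of the non-primitive part of X \<times> V iff fst is
  injective on B and fst ` B is a basis of X \ X0.  Two bases of X \ X0 are in bijection, since
  each element of one basis lies in L(c) for exactly one element c of the other.

  For the primitive parts: if D is a Hamel basis of X0 and E one of V, then
  D \<times> {0} \<union> {\<theta>} \<times> E is a Hamel basis of X0 \<times> V.  Hamel bases of a space carried by a
  subset of a monoid all have the same cardinality: the coordinates with respect to one basis
  embed the space linearly into the function space 'a \<Rightarrow> 'k, where invariance of dimension
  is available.
*)

theory Submission
  imports Defs "HOL-Library.Function_Algebras"
begin

section \<open>Vector spaces carried by a subset of a monoid\<close>

locale vector_space_on =
  fixes S :: "'a set" and add :: "'a \<Rightarrow> 'a \<Rightarrow> 'a" and z :: 'a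
    and sm :: "'k::field \<Rightarrow> 'a \<Rightarrow> 'a"
  assumes comm_monoid: "comm_monoid add z"
    and add_closed: "x \<in> S \<Longrightarrow> y \<in> S \<Longrightarrow> add x y \<in> S"
    and sm_closed: "x \<in> S \<Longrightarrow> sm a x \<in> S"
    and zero_closed: "z \<in> S"
    and sm_add: "x \<in> S \<Longrightarrow> y \<in> S \<Longrightarrow> sm a (add x y) = add (sm a x) (sm a y)"
    and sm_sm: "x \<in> S \<Longrightarrow> sm a (sm b x) = sm (a * b) x"
    and sm_distrib: "x \<in> S \<Longrightarrow> sm (a + b) x = add (sm a x) (sm b x)"
    and sm_one: "x \<in> S \<Longrightarrow> sm 1 x = x"
    and sm_zero: "x \<in> S \<Longrightarrow> sm 0 x = z"
begin

sublocale M: comm_monoid_set add z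
  using comm_monoid by (rule comm_monoid_set.intro)

abbreviation lincomb :: "('a \<Rightarrow> 'k) \<Rightarrow> 'a set \<Rightarrow> 'a" where
  "lincomb c F \<equiv> M.F (\<lambda>d. sm (c d) d) F"

text \<open>Spelled with \<^const>\<open>esum\<close> so that \<^const>\<open>prim_basis\<close> is literally a Hamel basis of the
  primitive space.\<close>

definition hamel_basis :: "'a set \<Rightarrow> bool" where
  "hamel_basis B \<longleftrightarrow> B \<subseteq> S \<and>
     (\<forall>F c. finite F \<longrightarrow> F \<subseteq> B \<longrightarrow> esum add z (\<lambda>d. sm (c d) d) F = z \<longrightarrow> (\<forall>d\<in>F. c d = 0)) \<and>
     (\<forall>x\<in>S. \<exists>F c. finite F \<and> F \<subseteq> B \<and> x = esum add z (\<lambda>d. sm (c d) d) F)"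

lemma esum_eq_F: "esum add z = M.F"
  by (simp add: esum_def)

lemma hamel_basis_subset: "hamel_basis B \<Longrightarrow> B \<subseteq> S"
  by (simp add: hamel_basis_def)

lemma hamel_basis_independent:
  "hamel_basis B \<Longrightarrow> finite F \<Longrightarrow> F \<subseteq> B \<Longrightarrow> lincomb c F = z \<Longrightarrow> d \<in> F \<Longrightarrow> c d = 0"
  unfolding hamel_basis_def esum_eq_F by blast

lemma hamel_basis_spanning:
  "hamel_basis B \<Longrightarrow> x \<in> S \<Longrightarrow> \<exists>F c. finite F \<and> F \<subseteq> B \<and> x = lincomb c F"
  unfolding hamel_basis_def esum_eq_F by blast

lemma hamel_basisI:
  assumes "B \<subseteq> S"
    and "\<And>F c d. finite F \<Longrightarrow> F \<subseteq> B \<Longrightarrow> lincomb c F = z \<Longrightarrow> d \<in> F \<Longrightarrow> c d = 0"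
    and "\<And>x. x \<in> S \<Longrightarrow> \<exists>F c. finite F \<and> F \<subseteq> B \<and> x = lincomb c F"
  shows "hamel_basis B"
  unfolding hamel_basis_def esum_eq_F using assms by (intro conjI allI impI ballI) auto

lemma F_closed: "(\<And>x. x \<in> A \<Longrightarrow> f x \<in> S) \<Longrightarrow> M.F f A \<in> S"
  by (induction A rule: infinite_finite_induct) (auto simp: zero_closed add_closed)

lemma lincomb_closed: "F \<subseteq> S \<Longrightarrow> lincomb c F \<in> S"
  by (rule F_closed) (auto intro: sm_closed)

lemma sm_z: "sm a z = z"
  using sm_zero[OF zero_closed] sm_sm[OF zero_closed, of a 0] by simp

lemma sm_F: "(\<And>x. x \<in> A \<Longrightarrow> f x \<in> S) \<Longrightarrow> sm a (M.F f A) = M.F (\<lambda>x. sm a (f x)) A"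
  by (induction A rule: infinite_finite_induct) (auto simp: sm_z sm_add F_closed)

lemma lincomb_superset:
  assumes "finite G" "G \<subseteq> S" "F \<subseteq> G" "\<And>b. b \<in> G - F \<Longrightarrow> c b = 0"
  shows "lincomb c G = lincomb c F"
  using assms by (intro M.mono_neutral_right) (auto simp: sm_zero)

lemma lincomb_add:
  assumes "F \<subseteq> S"
  shows "add (lincomb c F) (lincomb e F) = lincomb (\<lambda>b. c b + e b) F"
proof -
  have "add (lincomb c F) (lincomb e F) = M.F (\<lambda>d. add (sm (c d) d) (sm (e d) d)) F"
    by (rule M.distrib[symmetric])
  also have "\<dots> = lincomb (\<lambda>b. c b + e b) F"
    using assms by (intro M.cong) (auto simp: sm_distrib)
  finally show ?thesis .
qed

lemma lincomb_sm: "F \<subseteq> S \<Longrightarrow> sm a (lincomb c F) = lincomb (\<lambda>b. a * c b) F"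
  by (subst sm_F) (auto simp: sm_sm intro: sm_closed intro!: M.cong)

lemma add_neg: "x \<in> S \<Longrightarrow> add x (sm (-1) x) = z"
  using sm_distrib[of x 1 "-1"] by (simp add: sm_one sm_zero)

lemma hamel_basis_unique_coeffs:
  assumes B: "hamel_basis B" and F: "finite F" "F \<subseteq> B"
    and eq: "lincomb c F = lincomb e F" and b: "b \<in> F"
  shows "c b = e b"
proof -
  have FS: "F \<subseteq> S" using F hamel_basis_subset[OF B] by blast
  have "lincomb (\<lambda>b. c b + (-1) * e b) F = add (lincomb c F) (sm (-1) (lincomb e F))"
    using FS by (simp add: lincomb_add lincomb_sm)
  also have "\<dots> = z" using eq add_neg[OF lincomb_closed[OF FS]] by simp
  finally have "c b + (-1) * e b = 0" by (rule hamel_basis_independent[OF B F _ b])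
  then show ?thesis by simp
qed

definition coord :: "'a set \<Rightarrow> 'a \<Rightarrow> 'a \<Rightarrow> 'k" where
  "coord B x = (SOME c. \<exists>F. finite F \<and> F \<subseteq> B \<and> (\<forall>b. b \<notin> F \<longrightarrow> c b = 0) \<and> x = lincomb c F)"

lemma coord_exists:
  assumes B: "hamel_basis B" and x: "x \<in> S"
  shows "\<exists>F. finite F \<and> F \<subseteq> B \<and> (\<forall>b. b \<notin> F \<longrightarrow> coord B x b = 0) \<and> x = lincomb (coord B x) F"
proof -
  obtain F c where F: "finite F" "F \<subseteq> B" "x = lincomb c F"
    using hamel_basis_spanning[OF B x] by blast
  define c' where "c' b = (if b \<in> F then c b else 0)" for b
  let ?rep = "\<lambda>c. \<exists>F. finite F \<and> F \<subseteq> B \<and> (\<forall>b. b \<notin> F \<longrightarrow> c b = 0) \<and> x = lincomb c F"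
  have "x = lincomb c' F"
    unfolding F(3) by (intro M.cong) (auto simp: c'_def)
  then have "?rep c'"
    using F by (intro exI[of _ F]) (simp add: c'_def)
  then have "?rep (SOME c. ?rep c)" by (rule someI[where P = ?rep])
  then show ?thesis unfolding coord_def .
qed

lemma coord_unique:
  assumes B: "hamel_basis B" and F: "finite F" "F \<subseteq> B"
    and c: "\<And>b. b \<notin> F \<Longrightarrow> c b = 0" and x: "x = lincomb c F"
  shows "coord B x = c"
proof
  fix b
  have BS: "B \<subseteq> S" by (rule hamel_basis_subset[OF B])
  have "x \<in> S" using x F BS lincomb_closed by blast
  then obtain G where G: "finite G" "G \<subseteq> B" "\<And>b. b \<notin> G \<Longrightarrow> coord B x b = 0"
    "x = lincomb (coord B x) G"
    using coord_exists[OF B] by blast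
  have H: "finite (F \<union> G)" "F \<union> G \<subseteq> S" using F G BS by auto
  have "lincomb c (F \<union> G) = lincomb c F"
    using H c by (intro lincomb_superset) auto
  also have "\<dots> = lincomb (coord B x) G" using x G(4) by simp
  also have "\<dots> = lincomb (coord B x) (F \<union> G)"
    using H G(3) by (intro lincomb_superset[symmetric]) auto
  finally have "lincomb c (F \<union> G) = lincomb (coord B x) (F \<union> G)" .
  moreover have "F \<union> G \<subseteq> B" using F G by auto
  ultimately show "coord B x b = c b"
    using hamel_basis_unique_coeffs[OF B H(1)] c G(3) by (cases "b \<in> F \<union> G") auto
qed

lemma coord_support:
  assumes "hamel_basis B" "x \<in> S"
  shows "finite {b. coord B x b \<noteq> 0}" "{b. coord B x b \<noteq> 0} \<subseteq> B"
proof -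
  obtain F where "finite F" "F \<subseteq> B" "\<forall>b. b \<notin> F \<longrightarrow> coord B x b = 0"
    using coord_exists[OF assms] by blast
  then have "{b. coord B x b \<noteq> 0} \<subseteq> F" "F \<subseteq> B" by auto
  then show "finite {b. coord B x b \<noteq> 0}" "{b. coord B x b \<noteq> 0} \<subseteq> B"
    using \<open>finite F\<close> finite_subset by blast+
qed

lemma lincomb_coord:
  assumes B: "hamel_basis B" and x: "x \<in> S"
    and H: "finite H" "H \<subseteq> S" "{b. coord B x b \<noteq> 0} \<subseteq> H"
  shows "lincomb (coord B x) H = x"
proof -
  obtain F where F: "finite F" "F \<subseteq> B" "\<forall>b. b \<notin> F \<longrightarrow> coord B x b = 0"
    "x = lincomb (coord B x) F"
    using coord_exists[OF B x] by blast
  have FH: "finite (F \<union> H)" "F \<union> H \<subseteq> S" using F H hamel_basis_subset[OF B] by auto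
  have "lincomb (coord B x) H = lincomb (coord B x) (F \<union> H)"
    using FH H(3) by (intro lincomb_superset[symmetric]) auto
  also have "\<dots> = lincomb (coord B x) F"
    using FH F(3) by (intro lincomb_superset) auto
  finally show ?thesis using F(4) by simp
qed

lemma coord_add:
  assumes B: "hamel_basis B" and x: "x \<in> S" and y: "y \<in> S"
  shows "coord B (add x y) = coord B x + coord B y"
proof -
  define H where "H = {b. coord B x b \<noteq> 0} \<union> {b. coord B y b \<noteq> 0}"
  have H: "finite H" "H \<subseteq> B" "H \<subseteq> S"
    using coord_support[OF B x] coord_support[OF B y] hamel_basis_subset[OF B] by (auto simp: H_def)
  have "add x y = add (lincomb (coord B x) H) (lincomb (coord B y) H)"
    using lincomb_coord[OF B x H(1,3)] lincomb_coord[OF B y H(1,3)] by (simp add: H_def)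
  also have "\<dots> = lincomb (coord B x + coord B y) H"
    using H(3) by (simp add: lincomb_add)
  finally show ?thesis
    using H by (intro coord_unique[OF B]) (auto simp: H_def)
qed

lemma coord_sm:
  assumes B: "hamel_basis B" and x: "x \<in> S"
  shows "coord B (sm a x) = (\<lambda>b. a * coord B x b)"
proof -
  define H where "H = {b. coord B x b \<noteq> 0}"
  have H: "finite H" "H \<subseteq> B" "H \<subseteq> S"
    using coord_support[OF B x] hamel_basis_subset[OF B] by (auto simp: H_def)
  have "sm a x = sm a (lincomb (coord B x) H)"
    using lincomb_coord[OF B x H(1,3)] by (simp add: H_def)
  also have "\<dots> = lincomb (\<lambda>b. a * coord B x b) H"
    by (rule lincomb_sm[OF H(3)])
  finally show ?thesis
    using H by (intro coord_unique[OF B]) (auto simp: H_def)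
qed

lemma coord_zero: "hamel_basis B \<Longrightarrow> coord B z = 0"
  by (rule coord_unique[of B "{}"]) auto

lemma coord_inj_on:
  assumes B: "hamel_basis B"
  shows "inj_on (coord B) S"
proof (rule inj_onI)
  fix x y assume x: "x \<in> S" and y: "y \<in> S" and eq: "coord B x = coord B y"
  have "x = lincomb (coord B x) {b. coord B x b \<noteq> 0}"
    using lincomb_coord[OF B x] coord_support[OF B x] hamel_basis_subset[OF B] by auto
  also have "\<dots> = y"
    unfolding eq using lincomb_coord[OF B y] coord_support[OF B y] hamel_basis_subset[OF B] by auto
  finally show "x = y" .
qed

lemma coord_lincomb:
  assumes B: "hamel_basis B"
  shows "finite F \<Longrightarrow> F \<subseteq> S \<Longrightarrow> coord B (lincomb c F) = (\<Sum>b\<in>F. (\<lambda>x. c b * coord B b x))"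
proof (induction F rule: finite_induct)
  case empty
  then show ?case using coord_zero[OF B] by simp
next
  case (insert b F)
  then show ?case
    by (simp add: coord_add[OF B] coord_sm[OF B] sm_closed lincomb_closed)
qed

end

lemma vector_space_fun: "vector_space (\<lambda>(c::'k::field) (f::'a \<Rightarrow> 'k) x. c * f x)"
  by unfold_locales (auto simp: fun_eq_iff algebra_simps)

context vector_space_on
begin

interpretation W: vector_space "\<lambda>(c::'k) (f::'a \<Rightarrow> 'k) x. c * f x"
  by (rule vector_space_fun)

lemma coord_image_subspace:
  assumes B: "hamel_basis B"
  shows "W.subspace (coord B ` S)"
  unfolding W.subspace_def
proof (intro conjI ballI allI)
  show "0 \<in> coord B ` S"
    using coord_zero[OF B] zero_closed by (metis image_eqI)
next
  fix f g assume "f \<in> coord B ` S" "g \<in> coord B ` S"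
  then obtain x y where "x \<in> S" "y \<in> S" "f = coord B x" "g = coord B y" by blast
  then have "f + g = coord B (add x y)" "add x y \<in> S"
    using coord_add[OF B] add_closed by auto
  then show "f + g \<in> coord B ` S" by blast
next
  fix a f assume "f \<in> coord B ` S"
  then obtain x where "x \<in> S" "f = coord B x" by blast
  then have "(\<lambda>x. a * f x) = coord B (sm a x)" "sm a x \<in> S"
    using coord_sm[OF B] sm_closed by auto
  then show "(\<lambda>x. a * f x) \<in> coord B ` S" by blast
qed

lemma coord_image_independent:
  assumes B: "hamel_basis B" and B': "hamel_basis B'"
  shows "W.independent (coord B ` B')"
  unfolding W.independent_explicit_finite_subsets
proof (intro allI impI ballI)
  fix T u v
  assume T: "T \<subseteq> coord B ` B'" "finite T" and sum: "(\<Sum>v\<in>T. (\<lambda>x. u v * v x)) = 0"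
    and v: "v \<in> T"
  have B'S: "B' \<subseteq> S" by (rule hamel_basis_subset[OF B'])
  obtain F where F: "F \<subseteq> B'" "T = coord B ` F"
    using T(1) by (auto simp: subset_image_iff)
  have inj: "inj_on (coord B) F" using coord_inj_on[OF B] F(1) B'S inj_on_subset by blast
  have fin: "finite F" using T(2) F(2) inj finite_image_iff by blast
  have "coord B (lincomb (\<lambda>d. u (coord B d)) F) = (\<Sum>v\<in>T. (\<lambda>x. u v * v x))"
    using F B'S inj by (simp add: coord_lincomb[OF B fin] sum.reindex)
  then have "coord B (lincomb (\<lambda>d. u (coord B d)) F) = coord B z"
    using sum coord_zero[OF B] by simp
  then have lc0: "lincomb (\<lambda>d. u (coord B d)) F = z"
    using coord_inj_on[OF B] lincomb_closed F(1) B'S zero_closed by (meson inj_onD order_trans)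
  obtain d where d: "d \<in> F" "v = coord B d" using v F(2) by blast
  show "u v = 0"
    using hamel_basis_independent[OF B' fin F(1) lc0 d(1)] d(2) by simp
qed

lemma coord_image_span:
  assumes B: "hamel_basis B" and B': "hamel_basis B'"
  shows "W.span (coord B ` B') = coord B ` S"
proof
  have B'S: "B' \<subseteq> S" by (rule hamel_basis_subset[OF B'])
  show "W.span (coord B ` B') \<subseteq> coord B ` S"
    using B'S coord_image_subspace[OF B] by (intro W.span_minimal) auto
  show "coord B ` S \<subseteq> W.span (coord B ` B')"
  proof
    fix f assume "f \<in> coord B ` S"
    then obtain x where x: "x \<in> S" "f = coord B x" by blast
    obtain F c where F: "finite F" "F \<subseteq> B'" "x = lincomb c F"
      using hamel_basis_spanning[OF B' x(1)] by blast
    have "f = (\<Sum>b\<in>F. (\<lambda>x. c b * coord B b x))"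
      using x(2) F B'S by (simp add: coord_lincomb[OF B])
    also have "\<dots> \<in> W.span (coord B ` B')"
      using F(2) by (intro W.span_sum W.span_scale W.span_base) auto
    finally show "f \<in> W.span (coord B ` B')" .
  qed
qed

theorem hamel_basis_bij:
  assumes B: "hamel_basis B" and B': "hamel_basis B'"
  shows "\<exists>f. bij_betw f B B'"
proof -
  have "inj_on (coord B) B" "inj_on (coord B) B'"
    using coord_inj_on[OF B] hamel_basis_subset[OF B] hamel_basis_subset[OF B'] inj_on_subset
    by blast+
  then have bij: "bij_betw (coord B) B (coord B ` B)" "bij_betw (coord B) B' (coord B ` B')"
    by (auto intro: inj_on_imp_bij_betw)
  obtain g where g: "bij_betw g (coord B ` B) (coord B ` B')"
    using W.bij_if_span_eq_span_bases[OF coord_image_independent[OF B B]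
        coord_image_independent[OF B B']] coord_image_span[OF B B] coord_image_span[OF B B']
    by auto
  have "bij_betw ((inv_into B' (coord B) \<circ> g) \<circ> coord B) B B'"
    using bij_betw_trans[OF bij(1) bij_betw_trans[OF g bij_betw_inv_into[OF bij(2)]]] .
  then show ?thesis by blast
qed

section \<open>Products with a vector space\<close>

context
  fixes scale :: "'k \<Rightarrow> 'v::ab_group_add \<Rightarrow> 'v"
  assumes V: "vector_space scale"
begin

interpretation V: vector_space scale by (rule V)

lemma vector_space_on_prod: "vector_space_on (S \<times> UNIV) (prod_add add) (z, 0) (prod_sm sm scale)"
proof unfold_locales
  fix p q r :: "'a \<times> 'v"
  show "prod_add add (prod_add add p q) r = prod_add add p (prod_add add q r)"
    by (simp add: prod_add_def M.assoc add.assoc)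
  show "prod_add add p q = prod_add add q p"
    by (simp add: prod_add_def M.commute add.commute)
  show "prod_add add p (z, 0) = p"
    by (simp add: prod_add_def)
qed (auto simp: prod_add_def prod_sm_def add_closed sm_closed zero_closed sm_add sm_sm
       sm_distrib sm_one sm_zero V.scale_right_distrib V.scale_left_distrib)

interpretation P: vector_space_on "S \<times> UNIV" "prod_add add" "(z, 0)" "prod_sm sm scale"
  by (rule vector_space_on_prod)

lemma prod_lincomb:
  "P.lincomb c F = (M.F (\<lambda>q. sm (c q) (fst q)) F, \<Sum>q\<in>F. scale (c q) (snd q))"
  by (induction F rule: infinite_finite_induct) (auto simp: prod_add_def prod_sm_def)

lemma prod_lincomb_split:
  assumes F: "finite F" "F \<subseteq> (\<lambda>d. (d, 0)) ` D \<union> Pair z ` E"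
  shows "P.lincomb c F = (lincomb (\<lambda>d. c (d, 0)) {d \<in> D. (d, 0) \<in> F},
                          \<Sum>e\<in>{e \<in> E. (z, e) \<in> F}. scale (c (z, e)) e)"
proof -
  have "M.F (\<lambda>q. sm (c q) (fst q)) F =
      M.F (\<lambda>q. sm (c q) (fst q)) ((\<lambda>d. (d, 0)) ` {d \<in> D. (d, 0) \<in> F})"
    using F by (intro M.mono_neutral_right) (auto simp: sm_z)
  also have "\<dots> = lincomb (\<lambda>d. c (d, 0)) {d \<in> D. (d, 0) \<in> F}"
    by (subst M.reindex) (auto simp: inj_on_def comp_def)
  finally have fst:
    "M.F (\<lambda>q. sm (c q) (fst q)) F = lincomb (\<lambda>d. c (d, 0)) {d \<in> D. (d, 0) \<in> F}" .
  have "(\<Sum>q\<in>F. scale (c q) (snd q)) =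
      (\<Sum>q\<in>Pair z ` {e \<in> E. (z, e) \<in> F}. scale (c q) (snd q))"
    using F by (intro sum.mono_neutral_right) auto
  also have "\<dots> = (\<Sum>e\<in>{e \<in> E. (z, e) \<in> F}. scale (c (z, e)) e)"
    by (subst sum.reindex) (auto simp: inj_on_def)
  finally show ?thesis using fst by (simp add: prod_lincomb)
qed

lemma hamel_basis_prod:
  assumes D: "hamel_basis D" and E: "V.independent E" "V.span E = UNIV"
  shows "P.hamel_basis ((\<lambda>d. (d, 0)) ` D \<union> Pair z ` E)" (is "P.hamel_basis ?D'")
proof (rule P.hamel_basisI)
  have DS: "D \<subseteq> S" by (rule hamel_basis_subset[OF D])
  then show "?D' \<subseteq> S \<times> UNIV" using zero_closed by auto
next
  fix F c q assume F: "finite F" "F \<subseteq> ?D'" and lc: "P.lincomb c F = (z, 0)" and q: "q \<in> F"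
  have "{d \<in> D. (d, 0) \<in> F} \<subseteq> fst ` F" "{e \<in> E. (z, e) \<in> F} \<subseteq> snd ` F"
    by force+
  then have fin: "finite {d \<in> D. (d, 0) \<in> F}" "finite {e \<in> E. (z, e) \<in> F}"
    using F(1) by (meson finite_imageI finite_subset)+
  have lcD: "lincomb (\<lambda>d. c (d, 0)) {d \<in> D. (d, 0) \<in> F} = z"
    and lcE: "(\<Sum>e\<in>{e \<in> E. (z, e) \<in> F}. scale (c (z, e)) e) = 0"
    using lc prod_lincomb_split[OF F] by simp_all
  have "c (d, 0) = 0" if "d \<in> {d \<in> D. (d, 0) \<in> F}" for d
    using hamel_basis_independent[OF D fin(1) _ lcD that] by blast
  moreover have "c (z, e) = 0" if "e \<in> {e \<in> E. (z, e) \<in> F}" for e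
    using V.independentD[OF E(1) fin(2) _ lcE that] by blast
  ultimately show "c q = 0" using q F(2) by blast
next
  fix x :: "'a \<times> 'v" assume "x \<in> S \<times> UNIV"
  then obtain p v where x: "x = (p, v)" "p \<in> S" by auto
  obtain G c where G: "finite G" "G \<subseteq> D" "p = lincomb c G"
    using hamel_basis_spanning[OF D x(2)] by blast
  have "v \<in> V.span E" using E(2) by simp
  then obtain K u where K: "finite K" "K \<subseteq> E" "v = (\<Sum>e\<in>K. scale (u e) e)"
    unfolding V.span_explicit by blast
  have "0 \<notin> E" using E(1) V.dependent_zero by blast
  then have "0 \<notin> K" using K(2) by blast
  define F where "F = (\<lambda>d. (d, 0)) ` G \<union> Pair z ` K"
  define c' where "c' q = (if snd q = 0 then c (fst q) else u (snd q))" for q :: "'a \<times> 'v"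
  have F: "finite F" "F \<subseteq> ?D'" using G K by (auto simp: F_def)
  have "{d \<in> D. (d, 0) \<in> F} = G" "{e \<in> E. (z, e) \<in> F} = K"
    using G(2) K(2) \<open>0 \<notin> E\<close> by (auto simp: F_def)
  then have "P.lincomb c' F = (lincomb (\<lambda>d. c' (d, 0)) G, \<Sum>e\<in>K. scale (c' (z, e)) e)"
    by (simp add: prod_lincomb_split[OF F])
  also have "\<dots> = (p, v)"
    using \<open>0 \<notin> K\<close> G(3) K(3) by (auto simp: c'_def intro!: sum.cong)
  finally show "\<exists>F c. finite F \<and> F \<subseteq> ?D' \<and> x = P.lincomb c F"
    using F x(1) by (intro exI[of _ F] exI[of _ c']) simp
qed

lemma hamel_basis_prod_bij_Plus:
  assumes C: "P.hamel_basis C" and D: "hamel_basis D"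
    and E: "V.independent E" "V.span E = UNIV"
  shows "\<exists>f. bij_betw f C (D <+> E)"
proof -
  let ?D' = "(\<lambda>d. (d, 0)) ` D \<union> Pair z ` E"
  obtain g where g: "bij_betw g C ?D'"
    using P.hamel_basis_bij[OF C hamel_basis_prod[OF D E]] by blast
  have "0 \<notin> E" using E(1) V.dependent_zero by blast
  then have "bij_betw (case_sum (\<lambda>d. (d, 0)) (Pair z)) (D <+> E) ?D'"
    unfolding bij_betw_def Plus_def by (auto simp: inj_on_def image_Un image_image)
  then show ?thesis
    using bij_betw_trans[OF g bij_betw_inv_into] by blast
qed

end

end

section \<open>Exponential vector spaces\<close>

lemma prim_prod_le: "prim (prod_le le) = prim le \<times> UNIV"
  unfolding prim_def prod_le_def by (auto; blast)

lemma Lset_prod: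
  fixes le :: "'x \<Rightarrow> 'x \<Rightarrow> bool" and sm :: "'k::field \<Rightarrow> 'x \<Rightarrow> 'x"
    and scale :: "'k \<Rightarrow> 'v::ab_group_add \<Rightarrow> 'v"
  shows "Lset (prod_le le) (prod_add add) (prod_sm sm scale) b = Lset le add sm (fst b) \<times> UNIV"
proof (intro set_eqI iffI)
  fix q :: "'x \<times> 'v" assume "q \<in> Lset (prod_le le) (prod_add add) (prod_sm sm scale) b"
  then obtain a p where "a \<noteq> 0" "p \<in> prim (prod_le le)"
    "prod_le le (prod_add add (prod_sm sm scale a b) p) q"
    unfolding Lset_def by blast
  then have "a \<noteq> 0" "fst p \<in> prim le" "le (add (sm a (fst b)) (fst p)) (fst q)"
    by (auto simp: prim_prod_le prod_le_def prod_add_def prod_sm_def)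
  then show "q \<in> Lset le add sm (fst b) \<times> UNIV"
    unfolding Lset_def mem_Times_iff by blast
next
  fix q :: "'x \<times> 'v" assume "q \<in> Lset le add sm (fst b) \<times> UNIV"
  then obtain a p where a: "a \<noteq> 0" "p \<in> prim le" "le (add (sm a (fst b)) p) (fst q)"
    unfolding Lset_def mem_Times_iff by blast
  have "prod_le le (prod_add add (prod_sm sm scale a b) (p, snd q - scale a (snd b))) q"
    using a(3) by (simp add: prod_le_def prod_add_def prod_sm_def)
  moreover have "(p, snd q - scale a (snd b)) \<in> prim (prod_le le)"
    using a(2) by (simp add: prim_prod_le)
  ultimately show "q \<in> Lset (prod_le le) (prod_add add) (prod_sm sm scale) b"
    unfolding Lset_def using a(1) by blast
qed

lemma generates_prod_iff:
  fixes le :: "'x \<Rightarrow> 'x \<Rightarrow> bool" and sm :: "'k::field \<Rightarrow> 'x \<Rightarrow> 'x"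
    and scale :: "'k \<Rightarrow> 'v::ab_group_add \<Rightarrow> 'v" and B :: "('x \<times> 'v) set"
  shows "generates (prod_le le) (prod_add add) (prod_sm sm scale) B \<longleftrightarrow> generates le add sm (fst ` B)"
proof -
  have "(\<Union>b\<in>B. Lset (prod_le le) (prod_add add) (prod_sm sm scale) b) =
      (\<Union>b\<in>fst ` B. Lset le add sm b) \<times> UNIV"
    by (auto simp: Lset_prod)
  moreover have "B \<subseteq> - prim (prod_le le) \<longleftrightarrow> fst ` B \<subseteq> - prim le"
    by (auto simp: prim_prod_le mem_Times_iff)
  moreover have "- prim (prod_le le) = (- prim le) \<times> (UNIV :: 'v set)"
    by (auto simp: prim_prod_le)
  ultimately show ?thesis
    unfolding generates_def by (simp add: Times_eq_cancel2)
qed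

locale exp_vector_space =
  fixes le :: "'x \<Rightarrow> 'x \<Rightarrow> bool" and add :: "'x \<Rightarrow> 'x \<Rightarrow> 'x" and th :: 'x
    and sm :: "'k::field \<Rightarrow> 'x \<Rightarrow> 'x"
  assumes evs: "evs le add th sm"
begin

lemma evs_refl: "le x x"
  using evs unfolding evs_def reflp_on_def by simp

lemma evs_trans: "le x y \<Longrightarrow> le y w \<Longrightarrow> le x w"
  using evs unfolding evs_def by (meson transpD)

lemma comm_monoid: "comm_monoid add th"
  using evs unfolding evs_def by blast

lemma add_le_mono: "le x y \<Longrightarrow> le (add x w) (add y w)"
  using evs unfolding evs_def by blast

lemma sm_le_mono: "le x y \<Longrightarrow> le (sm a x) (sm a y)"
  using evs unfolding evs_def by blast

lemma sm_add: "sm a (add x y) = add (sm a x) (sm a y)"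
  using evs unfolding evs_def by blast

lemma sm_sm: "sm a (sm b x) = sm (a * b) x"
  using evs unfolding evs_def by blast

lemma sm_distrib_le: "le (sm (a + b) x) (add (sm a x) (sm b x))"
  using evs unfolding evs_def by blast

lemma sm_one: "sm 1 x = x"
  using evs unfolding evs_def by blast

lemma sm_eq_th_iff: "sm a x = th \<longleftrightarrow> a = 0 \<or> x = th"
  using evs unfolding evs_def by blast

lemma add_neg_eq_th_iff: "add x (sm (-1) x) = th \<longleftrightarrow> x \<in> prim le"
  using evs unfolding evs_def by blast

sublocale M: comm_monoid add th
  by (rule comm_monoid)

lemma prim_minimal: "p \<in> prim le \<Longrightarrow> le y p \<Longrightarrow> y = p"
  unfolding prim_def by blast

lemma th_in_prim: "th \<in> prim le"
  using add_neg_eq_th_iff[of th] sm_eq_th_iff by auto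

lemma add_in_prim:
  assumes "p \<in> prim le" "q \<in> prim le"
  shows "add p q \<in> prim le"
proof -
  have "add (add p q) (sm (-1) (add p q)) = add (add p (sm (-1) p)) (add q (sm (-1) q))"
    by (simp add: sm_add M.assoc M.left_commute)
  also have "\<dots> = th" using assms add_neg_eq_th_iff[of p] add_neg_eq_th_iff[of q] by simp
  finally show ?thesis using add_neg_eq_th_iff by blast
qed

lemma sm_in_prim:
  assumes "p \<in> prim le"
  shows "sm a p \<in> prim le"
proof -
  have "add (sm a p) (sm (-1) (sm a p)) = sm a (add p (sm (-1) p))"
    by (simp add: sm_add sm_sm mult.commute)
  also have "\<dots> = th" using assms add_neg_eq_th_iff sm_eq_th_iff by simp
  finally show ?thesis using add_neg_eq_th_iff by blast
qed

lemma sm_distrib_prim: "p \<in> prim le \<Longrightarrow> sm (a + b) p = add (sm a p) (sm b p)"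
  using prim_minimal[OF add_in_prim[OF sm_in_prim sm_in_prim] sm_distrib_le] by blast

lemma prim_vector_space_on: "vector_space_on (prim le) add th sm"
  by unfold_locales
    (auto simp: comm_monoid add_in_prim sm_in_prim th_in_prim sm_add sm_sm sm_distrib_prim
      sm_one sm_eq_th_iff)

lemma Lset_self: "x \<in> Lset le add sm x"
  unfolding Lset_def using th_in_prim evs_refl[of x]
  by (intro CollectI exI[of _ 1] exI[of _ th]) (simp add: sm_one)

lemma Lset_trans:
  assumes "x \<in> Lset le add sm y" "w \<in> Lset le add sm x"
  shows "w \<in> Lset le add sm y"
proof -
  obtain a p b q where a: "a \<noteq> 0" "p \<in> prim le" "le (add (sm a y) p) x"
    and b: "b \<noteq> 0" "q \<in> prim le" "le (add (sm b x) q) w"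
    using assms unfolding Lset_def by blast
  have "le (add (sm b (add (sm a y) p)) q) (add (sm b x) q)"
    using add_le_mono sm_le_mono a(3) by blast
  then have "le (add (sm (b * a) y) (add (sm b p) q)) w"
    using evs_trans b(3) by (simp add: sm_add sm_sm M.assoc)
  moreover have "b * a \<noteq> 0" "add (sm b p) q \<in> prim le"
    using a b add_in_prim sm_in_prim by auto
  ultimately show ?thesis unfolding Lset_def by blast
qed

lemma evs_basis_covered:
  assumes "evs_basis le add sm B" "evs_basis le add sm B'"
  shows "\<forall>b\<in>B. \<exists>c\<in>B'. b \<in> Lset le add sm c"
  using assms unfolding evs_basis_def generates_def by blast

lemma evs_basis_bij:
  assumes B: "evs_basis le add sm B" and B': "evs_basis le add sm B'"
  shows "\<exists>f. bij_betw f B B'"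
proof -
  obtain f where f: "\<forall>b\<in>B. f b \<in> B' \<and> b \<in> Lset le add sm (f b)"
    using evs_basis_covered[OF B B'] by metis
  obtain g where g: "\<forall>b\<in>B'. g b \<in> B \<and> b \<in> Lset le add sm (g b)"
    using evs_basis_covered[OF B' B] by metis
  have inverse: "g (f b) = b"
    if C: "evs_basis le add sm C" and "b \<in> C" "\<forall>b\<in>C. f b \<in> C' \<and> b \<in> Lset le add sm (f b)"
      "\<forall>b\<in>C'. g b \<in> C \<and> b \<in> Lset le add sm (g b)"
    for C C' f g and b :: 'x
  proof -
    have "b \<in> Lset le add sm (g (f b))" "g (f b) \<in> C"
      using that Lset_trans by blast+
    then show ?thesis
      using C \<open>b \<in> C\<close> Lset_self unfolding evs_basis_def orderly_independent_set_def by blast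
  qed
  show ?thesis
    using f g inverse[OF B _ f g] inverse[OF B' _ g f]
    by (intro exI bij_betw_byWitness[where f' = g]) auto
qed

lemma orderly_independent_set_prod_iff:
  fixes scale :: "'k \<Rightarrow> 'v::ab_group_add \<Rightarrow> 'v" and B :: "('x \<times> 'v) set"
  shows "orderly_independent_set (prod_le le) (prod_add add) (prod_sm sm scale) B \<longleftrightarrow>
    orderly_independent_set le add sm (fst ` B) \<and> inj_on fst B"
proof -
  have L: "x \<in> Lset (prod_le le) (prod_add add) (prod_sm sm scale) y \<longleftrightarrow>
      fst x \<in> Lset le add sm (fst y)"
    for x y :: "'x \<times> 'v"
    by (simp add: Lset_prod mem_Times_iff)
  show ?thesis
  proof (intro iffI conjI)
    assume indep: "orderly_independent_set (prod_le le) (prod_add add) (prod_sm sm scale) B"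
    show "inj_on fst B"
    proof (rule inj_onI, rule ccontr)
      fix x y assume "x \<in> B" "y \<in> B" "fst x = fst y" "x \<noteq> y"
      then show False
        using indep Lset_self[of "fst x"] unfolding orderly_independent_set_def L by metis
    qed
    show "orderly_independent_set le add sm (fst ` B)"
    proof (unfold orderly_independent_set_def, intro ballI impI)
      fix x y assume "x \<in> fst ` B" "y \<in> fst ` B" "x \<noteq> y"
      then obtain x' y' where "x' \<in> B" "y' \<in> B" "x = fst x'" "y = fst y'" by blast
      then show "\<not> (x \<in> Lset le add sm y \<or> y \<in> Lset le add sm x)"
        using indep \<open>x \<noteq> y\<close> unfolding orderly_independent_set_def L by auto
    qed
  next
    assume "orderly_independent_set le add sm (fst ` B) \<and> inj_on fst B"
    then show "orderly_independent_set (prod_le le) (prod_add add) (prod_sm sm scale) B"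
      unfolding orderly_independent_set_def L inj_on_def by blast
  qed
qed

lemma evs_basis_prod_iff:
  fixes scale :: "'k \<Rightarrow> 'v::ab_group_add \<Rightarrow> 'v" and B :: "('x \<times> 'v) set"
  shows "evs_basis (prod_le le) (prod_add add) (prod_sm sm scale) B \<longleftrightarrow>
    evs_basis le add sm (fst ` B) \<and> inj_on fst B"
  unfolding evs_basis_def generates_prod_iff orderly_independent_set_prod_iff by blast

lemma has_basis_prod_iff:
  fixes scale :: "'k \<Rightarrow> 'v::ab_group_add \<Rightarrow> 'v"
  shows "has_basis (prod_le le) (prod_add add) (prod_sm sm scale) \<longleftrightarrow> has_basis le add sm"
proof
  assume "has_basis (prod_le le) (prod_add add) (prod_sm sm scale)"
  then show "has_basis le add sm"
    unfolding has_basis_def evs_basis_prod_iff by blast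
next
  assume "has_basis le add sm"
  then obtain B where "evs_basis le add sm B" unfolding has_basis_def by blast
  then have "evs_basis (prod_le le) (prod_add add) (prod_sm sm scale) ((\<lambda>x. (x, 0 :: 'v)) ` B)"
    unfolding evs_basis_prod_iff by (simp add: image_image inj_on_def)
  then show "has_basis (prod_le le) (prod_add add) (prod_sm sm scale)"
    unfolding has_basis_def by blast
qed

lemma evs_basis_prod_bij:
  fixes scale :: "'k \<Rightarrow> 'v::ab_group_add \<Rightarrow> 'v"
  assumes B: "evs_basis (prod_le le) (prod_add add) (prod_sm sm scale) B"
    and B': "evs_basis le add sm B'"
  shows "\<exists>f. bij_betw f B B'"
proof -
  have "evs_basis le add sm (fst ` B)" "inj_on fst B"
    using B unfolding evs_basis_prod_iff by blast+
  then obtain f where "bij_betw f (fst ` B) B'" "bij_betw fst B (fst ` B)"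
    using evs_basis_bij[OF _ B'] inj_on_imp_bij_betw by blast
  then show ?thesis using bij_betw_trans by blast
qed

end

lemma thm8_conclusion_holds:
  assumes X: "evs le add th sm" and V: "vector_space scale"
  shows "thm8_conclusion le add th sm scale"
proof -
  interpret exp_vector_space le add th sm by (rule exp_vector_space.intro[OF X])
  interpret X0: vector_space_on "prim le" add th sm by (rule prim_vector_space_on)
  interpret P: vector_space_on "prim le \<times> UNIV" "prod_add add" "(th, 0)" "prod_sm sm scale"
    by (rule X0.vector_space_on_prod[OF V])
  have dim_prim: "(card_of C, BNF_Cardinal_Arithmetic.csum (card_of D) (card_of E)) \<in> ordIso"
    if C: "prim_basis (prod_le le) (prod_add add) (th, 0) (prod_sm sm scale) C"
      and D: "prim_basis le add th sm D"
      and E: "\<not> module.dependent scale E" "module.span scale E = UNIV" for C D E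
  proof -
    have "P.hamel_basis C"
      using C unfolding prim_basis_def prim_prod_le P.hamel_basis_def .
    moreover have "X0.hamel_basis D"
      using D unfolding prim_basis_def X0.hamel_basis_def .
    ultimately obtain f where "bij_betw f C (D <+> E)"
      using X0.hamel_basis_prod_bij_Plus[OF V _ _ E] by blast
    then show ?thesis
      unfolding csum_def Field_card_of by (auto simp: card_of_ordIso[symmetric])
  qed
  show ?thesis
    unfolding thm8_conclusion_def
    using has_basis_prod_iff evs_basis_prod_bij card_of_ordIso dim_prim by blast
qed

theorem mainTheorem8:
  fixes leR :: "'x \<Rightarrow> 'x \<Rightarrow> bool" and addR :: "'x \<Rightarrow> 'x \<Rightarrow> 'x" and thR :: 'x
    and smR :: "real \<Rightarrow> 'x \<Rightarrow> 'x" and scR :: "real \<Rightarrow> 'v::ab_group_add \<Rightarrow> 'v"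
    and leC :: "'y \<Rightarrow> 'y \<Rightarrow> bool" and addC :: "'y \<Rightarrow> 'y \<Rightarrow> 'y" and thC :: 'y
    and smC :: "complex \<Rightarrow> 'y \<Rightarrow> 'y" and scC :: "complex \<Rightarrow> 'w::ab_group_add \<Rightarrow> 'w"
  shows "(evs leR addR thR smR \<and> vector_space scR \<longrightarrow> thm8_conclusion leR addR thR smR scR)
       \<and> (evs leC addC thC smC \<and> vector_space scC \<longrightarrow> thm8_conclusion leC addC thC smC scC)"
  by (blast intro: thm8_conclusion_holds)

end
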